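(* The intuitionistic modal logic $\mathsf{mHC}$ is canonical and has the finite model property.
   Context: $\mathsf{mHC}$ is the smallest set of formulas (built from variables, $\bot,\to,\wedge,\vee,\Box$) containing all axioms of intuitionistic propositional logic, $\Box(A\to B)\to(\Box A\to\Box B)$, $A\to\Box A$ and $\Box A\to((B\to A)\vee B)$, closed under modus ponens, necessitation and substitution. Kripke semantics: frames $(W,\unlhd,\prec)$ with $\unlhd$ a partial order, $\prec$ a relation such that $w\unlhd v\prec x$ implies $w\prec x$; valuations into $\unlhd$-upsets; $\Box A=\{w\mid\forall x(w\prec x\Rightarrow x\in A)\}$. Canonical means the logic is valid in its canonical frame (prime theories of the logic ordered by inclusion, with $\Gamma\prec\Delta$ iff $\{A\mid\Box A\in\Gamma\}\subseteq\Delta$). The finite model property means every non-theorem fails in some finite frame validating the logic. *)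

theory Defs
  imports Main
begin

datatype fm = Var nat | Bot | Imp fm fm | Conj fm fm | Disj fm fm | Box fm

fun subst :: "(nat \<Rightarrow> fm) \<Rightarrow> fm \<Rightarrow> fm" where
  "subst s (Var p) = s p"
| "subst s Bot = Bot"
| "subst s (Imp A B) = Imp (subst s A) (subst s B)"
| "subst s (Conj A B) = Conj (subst s A) (subst s B)"
| "subst s (Disj A B) = Disj (subst s A) (subst s B)"
| "subst s (Box A) = Box (subst s A)"

inductive ipc_axiom :: "fm \<Rightarrow> bool" where
  "ipc_axiom (Imp A (Imp B A))"
| "ipc_axiom (Imp (Imp A (Imp B C)) (Imp (Imp A B) (Imp A C)))"
| "ipc_axiom (Imp (Conj A B) A)"
| "ipc_axiom (Imp (Conj A B) B)"
| "ipc_axiom (Imp A (Imp B (Conj A B)))"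
| "ipc_axiom (Imp A (Disj A B))"
| "ipc_axiom (Imp B (Disj A B))"
| "ipc_axiom (Imp (Imp A C) (Imp (Imp B C) (Imp (Disj A B) C)))"
| "ipc_axiom (Imp Bot A)"

inductive_set mHC :: "fm set" where
  ipc: "ipc_axiom A \<Longrightarrow> A \<in> mHC"
| K: "Imp (Box (Imp A B)) (Imp (Box A) (Box B)) \<in> mHC"
| box_intro: "Imp A (Box A) \<in> mHC"
| HC: "Imp (Box A) (Disj (Imp B A) B) \<in> mHC"
| MP: "A \<in> mHC \<Longrightarrow> Imp A B \<in> mHC \<Longrightarrow> B \<in> mHC"
| Nec: "A \<in> mHC \<Longrightarrow> Box A \<in> mHC"
| Subst: "A \<in> mHC \<Longrightarrow> subst s A \<in> mHC"

definition frame :: "'w set \<Rightarrow> ('w \<Rightarrow> 'w \<Rightarrow> bool) \<Rightarrow> ('w \<Rightarrow> 'w \<Rightarrow> bool) \<Rightarrow> bool" where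
  "frame W le R \<longleftrightarrow>
     (\<forall>w\<in>W. le w w) \<and>
     (\<forall>u\<in>W. \<forall>v\<in>W. \<forall>w\<in>W. le u v \<longrightarrow> le v w \<longrightarrow> le u w) \<and>
     (\<forall>u\<in>W. \<forall>v\<in>W. le u v \<longrightarrow> le v u \<longrightarrow> u = v) \<and>
     (\<forall>w\<in>W. \<forall>v\<in>W. \<forall>x\<in>W. le w v \<longrightarrow> R v x \<longrightarrow> R w x)"

definition upset :: "'w set \<Rightarrow> ('w \<Rightarrow> 'w \<Rightarrow> bool) \<Rightarrow> 'w set \<Rightarrow> bool" where
  "upset W le X \<longleftrightarrow> X \<subseteq> W \<and> (\<forall>w\<in>X. \<forall>v\<in>W. le w v \<longrightarrow> v \<in> X)"

definition valuation :: "'w set \<Rightarrow> ('w \<Rightarrow> 'w \<Rightarrow> bool) \<Rightarrow> (nat \<Rightarrow> 'w set) \<Rightarrow> bool" where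
  "valuation W le V \<longleftrightarrow> (\<forall>p. upset W le (V p))"

fun sem :: "'w set \<Rightarrow> ('w \<Rightarrow> 'w \<Rightarrow> bool) \<Rightarrow> ('w \<Rightarrow> 'w \<Rightarrow> bool) \<Rightarrow> (nat \<Rightarrow> 'w set) \<Rightarrow> fm \<Rightarrow> 'w set" where
  "sem W le R V (Var p) = V p"
| "sem W le R V Bot = {}"
| "sem W le R V (Imp A B) =
     {w\<in>W. \<forall>v\<in>W. le w v \<longrightarrow> v \<in> sem W le R V A \<longrightarrow> v \<in> sem W le R V B}"
| "sem W le R V (Conj A B) = sem W le R V A \<inter> sem W le R V B"
| "sem W le R V (Disj A B) = sem W le R V A \<union> sem W le R V B"
| "sem W le R V (Box A) = {w\<in>W. \<forall>x\<in>W. R w x \<longrightarrow> x \<in> sem W le R V A}"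

definition valid_in :: "fm set \<Rightarrow> 'w set \<Rightarrow> ('w \<Rightarrow> 'w \<Rightarrow> bool) \<Rightarrow> ('w \<Rightarrow> 'w \<Rightarrow> bool) \<Rightarrow> bool" where
  "valid_in L W le R \<longleftrightarrow> (\<forall>V. valuation W le V \<longrightarrow> (\<forall>A\<in>L. sem W le R V A = W))"

definition theory_of :: "fm set \<Rightarrow> fm set \<Rightarrow> bool" where
  "theory_of L \<Gamma> \<longleftrightarrow> L \<subseteq> \<Gamma> \<and> (\<forall>A B. A \<in> \<Gamma> \<longrightarrow> Imp A B \<in> \<Gamma> \<longrightarrow> B \<in> \<Gamma>)"

definition prime_theory :: "fm set \<Rightarrow> fm set \<Rightarrow> bool" where
  "prime_theory L \<Gamma> \<longleftrightarrow> theory_of L \<Gamma> \<and> Bot \<notin> \<Gamma> \<and>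
     (\<forall>A B. Disj A B \<in> \<Gamma> \<longrightarrow> A \<in> \<Gamma> \<or> B \<in> \<Gamma>)"

definition can_W :: "fm set \<Rightarrow> fm set set" where
  "can_W L = {\<Gamma>. prime_theory L \<Gamma>}"

definition can_le :: "fm set \<Rightarrow> fm set \<Rightarrow> bool" where
  "can_le \<Gamma> \<Delta> \<longleftrightarrow> \<Gamma> \<subseteq> \<Delta>"

definition can_R :: "fm set \<Rightarrow> fm set \<Rightarrow> bool" where
  "can_R \<Gamma> \<Delta> \<longleftrightarrow> {A. Box A \<in> \<Gamma>} \<subseteq> \<Delta>"

definition canonical :: "fm set \<Rightarrow> bool" where
  "canonical L \<longleftrightarrow> valid_in L (can_W L) can_le can_R"

text \<open>Finite frames are taken with worlds drawn from \<open>nat\<close> (any finite frame is isomorphic to one).\<close>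
definition fmp :: "fm set \<Rightarrow> bool" where
  "fmp L \<longleftrightarrow> (\<forall>A. A \<notin> L \<longrightarrow>
     (\<exists>(W::nat set) le R V w. finite W \<and> frame W le R \<and> valid_in L W le R \<and>
        valuation W le V \<and> w \<in> W \<and> w \<notin> sem W le R V A))"

end

(* Soundness: mHC is valid in every frame with \<prec> \<subseteq> \<unlhd> \<subseteq> \<prec> \<union> =, the axioms A \<rightarrow> \<box>A and
   \<box>A \<rightarrow> (B \<rightarrow> A) \<or> B accounting for the two inclusions. The canonical frame satisfies
   both: \<box>-successors are supersets because A \<rightarrow> \<box>A is a theorem, and if the prime theory
   \<Gamma> is properly contained in \<Delta>, pick B \<in> \<Delta> - \<Gamma>; then \<box>A \<in> \<Gamma> gives (B \<rightarrow> A) \<or> B \<in> \<Gamma>, hence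
   B \<rightarrow> A \<in> \<Gamma> \<subseteq> \<Delta> and A \<in> \<Delta>. Validity in the canonical frame is therefore just soundness.

   For the finite model property, a non-theorem A lies outside some prime theory. Filtering the
   canonical model through the subformulas \<Sigma> of A, i.e. replacing each prime theory \<Gamma> by
   \<Gamma> \<inter> \<Sigma>, gives a finite model; the same two facts about prime theories show that the
   filtered relations can be chosen to satisfy \<prec> \<subseteq> \<unlhd> \<subseteq> \<prec> \<union> = while the truth lemma still
   holds. The finite frame is finally copied onto an initial segment of the naturals. *)

theory Submission
  imports Defs
begin

definition mHC_frame :: "'w set \<Rightarrow> ('w \<Rightarrow> 'w \<Rightarrow> bool) \<Rightarrow> ('w \<Rightarrow> 'w \<Rightarrow> bool) \<Rightarrow> bool" where
  "mHC_frame W le R \<longleftrightarrow> frame W le R \<and>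
     (\<forall>w\<in>W. \<forall>x\<in>W. R w x \<longrightarrow> le w x) \<and>
     (\<forall>w\<in>W. \<forall>v\<in>W. le w v \<longrightarrow> w = v \<or> R w v)"

lemma sem_subset: "valuation W le V \<Longrightarrow> sem W le R V A \<subseteq> W"
  by (induction A) (auto simp: valuation_def upset_def)

lemma sem_upset:
  assumes "frame W le R" and "valuation W le V"
  shows "upset W le (sem W le R V A)"
proof (induction A)
  case (Imp A B)
  have trans: "le w u" if "w \<in> W" "v \<in> W" "u \<in> W" "le w v" "le v u" for w v u
    using assms(1) that unfolding frame_def by blast
  show ?case unfolding upset_def
  proof (intro conjI ballI impI)
    fix w v assume w: "w \<in> sem W le R V (Imp A B)" and v: "v \<in> W" "le w v"
    have "u \<in> sem W le R V B" if "u \<in> W" "le v u" "u \<in> sem W le R V A" for u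
      using w v that trans[of w v u] by simp
    with v show "v \<in> sem W le R V (Imp A B)" by simp
  qed auto
next
  case (Box A)
  have "R w x" if "w \<in> W" "v \<in> W" "x \<in> W" "le w v" "R v x" for w v x
    using assms(1) that unfolding frame_def by blast
  then show ?case unfolding upset_def by auto
qed (use assms(2) in \<open>auto simp: valuation_def upset_def\<close>)

lemma sem_mono:
  "\<lbrakk>frame W le R; valuation W le V; w \<in> sem W le R V A; v \<in> W; le w v\<rbrakk>
    \<Longrightarrow> v \<in> sem W le R V A"
  using sem_upset unfolding upset_def by blast

lemma sem_subst: "sem W le R V (subst s A) = sem W le R (\<lambda>p. sem W le R V (s p)) A"
  by (induction A) auto

lemma sem_ImpE:
  "\<lbrakk>w \<in> sem W le R V (Imp A B); v \<in> W; le w v; v \<in> sem W le R V A\<rbrakk> \<Longrightarrow> v \<in> sem W le R V B"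
  by simp

lemma sem_Imp_eq_W_iff:
  assumes "frame W le R" and "valuation W le V"
  shows "sem W le R V (Imp A B) = W \<longleftrightarrow> sem W le R V A \<subseteq> sem W le R V B"
proof -
  have refl: "w \<in> W \<Longrightarrow> le w w" for w using assms(1) unfolding frame_def by blast
  show ?thesis
  proof
    assume valid: "sem W le R V (Imp A B) = W"
    show "sem W le R V A \<subseteq> sem W le R V B"
    proof
      fix w assume "w \<in> sem W le R V A"
      moreover have "w \<in> W" using calculation sem_subset[OF assms(2)] by blast
      ultimately show "w \<in> sem W le R V B" using valid refl by (metis sem_ImpE)
    qed
  qed (use sem_subset[OF assms(2)] in auto)
qed

context
  fixes W le R V
  assumes frame: "frame W le R" and val: "valuation W le V"
begin

private lemma refl: "w \<in> W \<Longrightarrow> le w w"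
  using frame unfolding frame_def by blast

private lemma trans: "\<lbrakk>u \<in> W; v \<in> W; w \<in> W; le u v; le v w\<rbrakk> \<Longrightarrow> le u w"
  using frame unfolding frame_def by blast

private lemma sub: "w \<in> sem W le R V A \<Longrightarrow> w \<in> W"
  using sem_subset[OF val] by blast

private lemma mono: "\<lbrakk>w \<in> sem W le R V A; v \<in> W; le w v\<rbrakk> \<Longrightarrow> v \<in> sem W le R V A"
  using sem_mono[OF frame val] .

private lemma validI: "(\<And>w. w \<in> sem W le R V A \<Longrightarrow> w \<in> sem W le R V B) \<Longrightarrow> sem W le R V (Imp A B) = W"
  using sem_Imp_eq_W_iff[OF frame val] by blast

private lemma ImpI:
  "\<lbrakk>w \<in> W; \<And>v. \<lbrakk>v \<in> W; le w v; v \<in> sem W le R V A\<rbrakk> \<Longrightarrow> v \<in> sem W le R V B\<rbrakk>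
    \<Longrightarrow> w \<in> sem W le R V (Imp A B)"
  by simp

private lemma BoxI:
  "\<lbrakk>w \<in> W; \<And>x. \<lbrakk>x \<in> W; R w x\<rbrakk> \<Longrightarrow> x \<in> sem W le R V A\<rbrakk> \<Longrightarrow> w \<in> sem W le R V (Box A)"
  by simp

private lemma MP_at:
  assumes "w \<in> sem W le R V (Imp A B)" and "w \<in> sem W le R V A"
  shows "w \<in> sem W le R V B"
  using sem_ImpE[OF assms(1) sub[OF assms(2)] refl[OF sub[OF assms(2)]] assms(2)] .

lemma ipc_axiom_valid: "ipc_axiom A \<Longrightarrow> sem W le R V A = W"
proof (induction rule: ipc_axiom.induct)
  case (1 A B)
  show ?case
  proof (intro validI ImpI)
    fix w v assume "w \<in> sem W le R V A" "v \<in> W" "le w v"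
    then show "v \<in> sem W le R V A" by (rule mono)
  qed (rule sub)
next
  case (2 A B C)
  show ?case
  proof (intro validI ImpI)
    fix w u x assume w: "w \<in> sem W le R V (Imp A (Imp B C))" and u: "u \<in> W" "le w u"
      "u \<in> sem W le R V (Imp A B)" and x: "x \<in> W" "le u x" "x \<in> sem W le R V A"
    have "x \<in> sem W le R V (Imp B C)" using mono[OF w] trans[of w u x] sub[OF w] u x MP_at by blast
    moreover have "x \<in> sem W le R V B" using mono[OF u(3) x(1,2)] x(3) MP_at by blast
    ultimately show "x \<in> sem W le R V C" by (rule MP_at)
  qed (use sub in blast)+
next
  case (5 A B)
  show ?case
  proof (intro validI ImpI)
    fix w v assume "w \<in> sem W le R V A" "v \<in> W" "le w v" "v \<in> sem W le R V B"
    then show "v \<in> sem W le R V (Conj A B)" using mono by simp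
  qed (rule sub)
next
  case (8 A C B)
  show ?case
  proof (intro validI ImpI)
    fix w u x assume w: "w \<in> sem W le R V (Imp A C)" and u: "u \<in> W" "le w u"
      "u \<in> sem W le R V (Imp B C)" and x: "x \<in> W" "le u x" "x \<in> sem W le R V (Disj A B)"
    have "le w x" using trans[of w u x] sub[OF w] u x by blast
    then show "x \<in> sem W le R V C" using sem_ImpE[OF w x(1)] sem_ImpE[OF u(3) x(1,2)] x(3) by auto
  qed (use sub in blast)+
qed (intro validI; simp)+

lemma K_valid: "sem W le R V (Imp (Box (Imp A B)) (Imp (Box A) (Box B))) = W"
proof (intro validI ImpI)
  fix w v assume w: "w \<in> sem W le R V (Box (Imp A B))" and v: "v \<in> W" "le w v"
    "v \<in> sem W le R V (Box A)"
  show "v \<in> sem W le R V (Box B)"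
  proof (rule BoxI[OF v(1)])
    fix x assume "x \<in> W" "R v x"
    moreover have "R w x" using frame sub[OF w] v \<open>x \<in> W\<close> \<open>R v x\<close> unfolding frame_def by blast
    ultimately have "x \<in> sem W le R V (Imp A B)" "x \<in> sem W le R V A" using w v(3) by simp_all
    then show "x \<in> sem W le R V B" by (rule MP_at)
  qed
qed (rule sub)

lemma box_intro_valid:
  assumes "\<forall>w\<in>W. \<forall>x\<in>W. R w x \<longrightarrow> le w x"
  shows "sem W le R V (Imp A (Box A)) = W"
proof (rule validI)
  fix w assume w: "w \<in> sem W le R V A"
  show "w \<in> sem W le R V (Box A)"
  proof (rule BoxI[OF sub[OF w]])
    fix x assume "x \<in> W" "R w x"
    then have "le w x" using assms sub[OF w] by blast
    with w \<open>x \<in> W\<close> show "x \<in> sem W le R V A" by (rule mono)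
  qed
qed

lemma HC_valid:
  assumes "\<forall>w\<in>W. \<forall>v\<in>W. le w v \<longrightarrow> w = v \<or> R w v"
  shows "sem W le R V (Imp (Box A) (Disj (Imp B A) B)) = W"
proof (rule validI)
  fix w assume w: "w \<in> sem W le R V (Box A)"
  have "w \<in> sem W le R V (Imp B A)" if "w \<notin> sem W le R V B"
  proof (rule ImpI)
    fix v assume "v \<in> W" "le w v" "v \<in> sem W le R V B"
    then have "R w v" using assms sub[OF w] that by metis
    then show "v \<in> sem W le R V A" using w \<open>v \<in> W\<close> by simp
  qed (rule sub[OF w])
  then show "w \<in> sem W le R V (Disj (Imp B A) B)" by auto
qed

end

lemma mHC_valid_in:
  assumes "mHC_frame W le R"
  shows "valid_in mHC W le R"
  unfolding valid_in_def
proof (intro allI impI ballI)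
  fix V A assume "valuation W le V" "A \<in> mHC"
  from \<open>A \<in> mHC\<close> \<open>valuation W le V\<close> show "sem W le R V A = W"
  proof (induction A arbitrary: V rule: mHC.induct)
    case (ipc A)
    then show ?case using assms ipc_axiom_valid unfolding mHC_frame_def by blast
  next
    case (K A B)
    then show ?case using assms K_valid unfolding mHC_frame_def by blast
  next
    case (box_intro A)
    then show ?case using assms box_intro_valid unfolding mHC_frame_def by blast
  next
    case (HC A B)
    then show ?case using assms HC_valid unfolding mHC_frame_def by blast
  next
    case (MP A B)
    have "frame W le R" using assms unfolding mHC_frame_def by blast
    moreover have "sem W le R V (Imp A B) = W" using MP.IH(2) MP.prems by blast
    ultimately have "sem W le R V A \<subseteq> sem W le R V B"
      using sem_Imp_eq_W_iff MP.prems by blast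
    then show ?case using MP.IH(1) MP.prems sem_subset by blast
  next
    case (Nec A)
    then show ?case by auto
  next
    case (Subst A s)
    have "valuation W le (\<lambda>p. sem W le R V (s p))"
      using sem_upset assms Subst.prems unfolding mHC_frame_def valuation_def by blast
    then show ?case using Subst.IH by (simp add: sem_subst)
  qed
qed

lemmas mHC_ipc_axioms = ipc_axiom.intros[THEN mHC.ipc]

lemma Imp_self_mHC: "Imp A A \<in> mHC"
  using mHC.MP[OF mHC_ipc_axioms(1) mHC.MP[OF mHC_ipc_axioms(1) mHC_ipc_axioms(2)]] .

lemma theory_of_mHC: "theory_of mHC mHC"
  unfolding theory_of_def using mHC.MP by blast

lemma theory_of_mem: "theory_of mHC \<Gamma> \<Longrightarrow> A \<in> mHC \<Longrightarrow> A \<in> \<Gamma>"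
  unfolding theory_of_def by blast

lemma theory_of_mp: "theory_of mHC \<Gamma> \<Longrightarrow> A \<in> \<Gamma> \<Longrightarrow> Imp A B \<in> \<Gamma> \<Longrightarrow> B \<in> \<Gamma>"
  unfolding theory_of_def by blast

lemma theory_of_mp_theorem: "theory_of mHC \<Gamma> \<Longrightarrow> A \<in> \<Gamma> \<Longrightarrow> Imp A B \<in> mHC \<Longrightarrow> B \<in> \<Gamma>"
  using theory_of_mp theory_of_mem by blast

lemma prime_theory_theory_of: "prime_theory mHC \<Gamma> \<Longrightarrow> theory_of mHC \<Gamma>"
  unfolding prime_theory_def by blast

lemma theory_of_Conj_iff:
  assumes "theory_of mHC \<Gamma>"
  shows "Conj A B \<in> \<Gamma> \<longleftrightarrow> A \<in> \<Gamma> \<and> B \<in> \<Gamma>"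
  using theory_of_mp_theorem[OF assms _ mHC_ipc_axioms(3)] theory_of_mp_theorem[OF assms _ mHC_ipc_axioms(4)]
    theory_of_mp[OF assms _ theory_of_mp_theorem[OF assms _ mHC_ipc_axioms(5)]]
  by blast

lemma prime_theory_Disj_iff:
  assumes "prime_theory mHC \<Gamma>"
  shows "Disj A B \<in> \<Gamma> \<longleftrightarrow> A \<in> \<Gamma> \<or> B \<in> \<Gamma>"
  using assms theory_of_mp_theorem[OF prime_theory_theory_of[OF assms] _ mHC_ipc_axioms(6)]
    theory_of_mp_theorem[OF prime_theory_theory_of[OF assms] _ mHC_ipc_axioms(7)]
  unfolding prime_theory_def by blast

lemma theory_of_Union_chain:
  assumes "C \<noteq> {}" and "chain\<^sub>\<subseteq> C" and "\<forall>\<Gamma>\<in>C. theory_of mHC \<Gamma>"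
  shows "theory_of mHC (\<Union>C)"
  unfolding theory_of_def
proof (intro conjI allI impI)
  show "mHC \<subseteq> \<Union>C" using assms(1,3) unfolding theory_of_def by blast
next
  fix A B assume "A \<in> \<Union>C" "Imp A B \<in> \<Union>C"
  then obtain \<Gamma> \<Delta> where "\<Gamma> \<in> C" "\<Delta> \<in> C" "A \<in> \<Gamma>" "Imp A B \<in> \<Delta>" by blast
  with assms(2,3) show "B \<in> \<Union>C"
    unfolding chain_subset_def by (metis UnionI subsetD theory_of_mp)
qed

text \<open>The theory \<open>\<Gamma> + B\<close>, presented via the deduction theorem.\<close>
definition adjoin :: "fm set \<Rightarrow> fm \<Rightarrow> fm set" where
  "adjoin \<Gamma> B = {D. Imp B D \<in> \<Gamma>}"

lemma subset_adjoin: "theory_of mHC \<Gamma> \<Longrightarrow> \<Gamma> \<subseteq> adjoin \<Gamma> B"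
  unfolding adjoin_def using theory_of_mp_theorem mHC_ipc_axioms(1) by blast

lemma mem_adjoin: "theory_of mHC \<Gamma> \<Longrightarrow> B \<in> adjoin \<Gamma> B"
  unfolding adjoin_def using theory_of_mem Imp_self_mHC by blast

lemma theory_of_adjoin:
  assumes "theory_of mHC \<Gamma>"
  shows "theory_of mHC (adjoin \<Gamma> B)"
  unfolding theory_of_def
proof (intro conjI allI impI)
  show "mHC \<subseteq> adjoin \<Gamma> B" using subset_adjoin[OF assms] theory_of_mem[OF assms] by blast
next
  fix D E assume "D \<in> adjoin \<Gamma> B" "Imp D E \<in> adjoin \<Gamma> B"
  then show "E \<in> adjoin \<Gamma> B"
    unfolding adjoin_def using theory_of_mp[OF assms] theory_of_mp_theorem[OF assms _ mHC_ipc_axioms(2)]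
    by blast
qed

lemma lindenbaum:
  assumes "theory_of mHC \<Gamma>" and "A \<notin> \<Gamma>"
  obtains \<Delta> where "prime_theory mHC \<Delta>" "\<Gamma> \<subseteq> \<Delta>" "A \<notin> \<Delta>"
proof -
  define \<T> where "\<T> = {\<Delta>. theory_of mHC \<Delta> \<and> \<Gamma> \<subseteq> \<Delta> \<and> A \<notin> \<Delta>}"
  have "\<exists>U\<in>\<T>. \<forall>\<Delta>\<in>C. \<Delta> \<subseteq> U" if "C \<in> chains \<T>" for C
  proof (cases "C = {}")
    case True
    then show ?thesis using assms unfolding \<T>_def by blast
  next
    case False
    with that have "\<Union>C \<in> \<T>"
      using theory_of_Union_chain unfolding \<T>_def chains_def by blast
    then show ?thesis by blast
  qed
  from Zorn_Lemma2[OF ballI[OF this]]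
  obtain M where M: "M \<in> \<T>" and max: "\<forall>\<Delta>\<in>\<T>. M \<subseteq> \<Delta> \<longrightarrow> \<Delta> = M"
    by blast
  have thy: "theory_of mHC M" and "\<Gamma> \<subseteq> M" "A \<notin> M" using M unfolding \<T>_def by auto
  have Imp_A: "Imp B A \<in> M" if "B \<notin> M" for B
  proof (rule ccontr)
    assume "Imp B A \<notin> M"
    then have "A \<notin> adjoin M B" unfolding adjoin_def by simp
    with theory_of_adjoin[OF thy] subset_adjoin[OF thy] \<open>\<Gamma> \<subseteq> M\<close>
    have "adjoin M B \<in> \<T>" unfolding \<T>_def by blast
    then have "adjoin M B = M" using max subset_adjoin[OF thy] by blast
    then show False using mem_adjoin[OF thy, of B] that by simp
  qed
  have "Bot \<notin> M" using theory_of_mp_theorem[OF thy _ mHC_ipc_axioms(9)] \<open>A \<notin> M\<close> by blast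
  moreover have "B \<in> M \<or> C \<in> M" if "Disj B C \<in> M" for B C
  proof (rule ccontr)
    assume "\<not> (B \<in> M \<or> C \<in> M)"
    then have "Imp (Disj B C) A \<in> M"
      using Imp_A theory_of_mp[OF thy] theory_of_mp_theorem[OF thy _ mHC_ipc_axioms(8)] by blast
    then show False using theory_of_mp[OF thy that] \<open>A \<notin> M\<close> by blast
  qed
  ultimately show ?thesis using that thy \<open>\<Gamma> \<subseteq> M\<close> \<open>A \<notin> M\<close> unfolding prime_theory_def by blast
qed

definition unbox :: "fm set \<Rightarrow> fm set" where
  "unbox \<Gamma> = {A. Box A \<in> \<Gamma>}"

lemma theory_of_unbox:
  assumes "theory_of mHC \<Gamma>"
  shows "theory_of mHC (unbox \<Gamma>)"
  unfolding theory_of_def unbox_def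
  using theory_of_mem[OF assms mHC.Nec] theory_of_mp[OF assms]
    theory_of_mp_theorem[OF assms _ mHC.K]
  by blast

lemma unbox_subset_imp_subset:
  "theory_of mHC \<Gamma> \<Longrightarrow> unbox \<Gamma> \<subseteq> \<Delta> \<Longrightarrow> \<Gamma> \<subseteq> \<Delta>"
  unfolding unbox_def using theory_of_mp_theorem mHC.box_intro by blast

lemma psubset_imp_unbox_subset:
  assumes "prime_theory mHC \<Gamma>" and "theory_of mHC \<Delta>" and "\<Gamma> \<subset> \<Delta>"
  shows "unbox \<Gamma> \<subseteq> \<Delta>"
proof
  fix A assume "A \<in> unbox \<Gamma>"
  obtain B where B: "B \<in> \<Delta>" "B \<notin> \<Gamma>" using assms(3) by blast
  have "Disj (Imp B A) B \<in> \<Gamma>"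
    using \<open>A \<in> unbox \<Gamma>\<close> theory_of_mp_theorem[OF prime_theory_theory_of[OF assms(1)] _ mHC.HC]
    unfolding unbox_def by blast
  then have "Imp B A \<in> \<Gamma>" using prime_theory_Disj_iff[OF assms(1)] B(2) by blast
  then show "A \<in> \<Delta>" using assms(3) B(1) theory_of_mp[OF assms(2)] by blast
qed

lemma can_mHC_frame: "mHC_frame (can_W mHC) can_le can_R"
  unfolding mHC_frame_def frame_def can_W_def can_le_def can_R_def mem_Collect_eq
  using unbox_subset_imp_subset psubset_imp_unbox_subset prime_theory_theory_of
  unfolding unbox_def by blast

theorem canonical_mHC: "canonical mHC"
  unfolding canonical_def by (rule mHC_valid_in[OF can_mHC_frame])

lemma prime_extension_Imp:
  assumes "prime_theory mHC \<Gamma>" and "Imp A B \<notin> \<Gamma>"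
  obtains \<Delta> where "prime_theory mHC \<Delta>" "\<Gamma> \<subseteq> \<Delta>" "A \<in> \<Delta>" "B \<notin> \<Delta>"
proof -
  have thy: "theory_of mHC \<Gamma>" using prime_theory_theory_of[OF assms(1)] .
  have "B \<notin> adjoin \<Gamma> A" using assms(2) unfolding adjoin_def by simp
  with theory_of_adjoin[OF thy] obtain \<Delta>
    where "prime_theory mHC \<Delta>" "adjoin \<Gamma> A \<subseteq> \<Delta>" "B \<notin> \<Delta>" by (rule lindenbaum)
  with that subset_adjoin[OF thy] mem_adjoin[OF thy] show ?thesis by blast
qed

lemma prime_extension_Box:
  assumes "theory_of mHC \<Gamma>" and "Box A \<notin> \<Gamma>"
  obtains \<Delta> where "prime_theory mHC \<Delta>" "unbox \<Gamma> \<subseteq> \<Delta>" "A \<notin> \<Delta>"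
  using lindenbaum[OF theory_of_unbox[OF assms(1)]] assms(2) unfolding unbox_def by blast

fun subformulas :: "fm \<Rightarrow> fm set" where
  "subformulas (Var p) = {Var p}"
| "subformulas Bot = {Bot}"
| "subformulas (Imp A B) = insert (Imp A B) (subformulas A \<union> subformulas B)"
| "subformulas (Conj A B) = insert (Conj A B) (subformulas A \<union> subformulas B)"
| "subformulas (Disj A B) = insert (Disj A B) (subformulas A \<union> subformulas B)"
| "subformulas (Box A) = insert (Box A) (subformulas A)"

lemma finite_subformulas: "finite (subformulas A)"
  by (induction A) auto

lemma mem_subformulas_self: "A \<in> subformulas A"
  by (cases A) auto

lemma subformulas_trans: "B \<in> subformulas A \<Longrightarrow> subformulas B \<subseteq> subformulas A"
  by (induction A) auto

lemma unbox_subformulas: "unbox (subformulas A) \<subseteq> subformulas A"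
proof
  fix B assume "B \<in> unbox (subformulas A)"
  then have "subformulas (Box B) \<subseteq> subformulas A" by (intro subformulas_trans) (simp add: unbox_def)
  then show "B \<in> subformulas A" using mem_subformulas_self by auto
qed

text \<open>The relations of the filtration are defined on the traces \<open>\<Gamma> \<inter> \<Sigma>\<close> directly, so that
  the conditions of \<open>mHC_frame\<close> hold by construction.\<close>
definition filt_W :: "fm set \<Rightarrow> fm set set" where
  "filt_W \<Sigma> = {\<Gamma> \<inter> \<Sigma> | \<Gamma>. prime_theory mHC \<Gamma>}"

definition filt_R :: "fm set \<Rightarrow> fm set \<Rightarrow> bool" where
  "filt_R S T \<longleftrightarrow> S \<subseteq> T \<and> unbox S \<subseteq> T"

definition filt_le :: "fm set \<Rightarrow> fm set \<Rightarrow> bool" where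
  "filt_le S T \<longleftrightarrow> S = T \<or> filt_R S T"

definition filt_V :: "fm set \<Rightarrow> nat \<Rightarrow> fm set set" where
  "filt_V \<Sigma> p = {S \<in> filt_W \<Sigma>. Var p \<in> S}"

lemma filt_mHC_frame: "mHC_frame W filt_le filt_R"
  unfolding mHC_frame_def frame_def filt_le_def filt_R_def by blast

lemma filt_valuation: "valuation (filt_W \<Sigma>) filt_le (filt_V \<Sigma>)"
  unfolding valuation_def upset_def filt_V_def filt_le_def filt_R_def by blast

lemma finite_filt_W: "finite \<Sigma> \<Longrightarrow> finite (filt_W \<Sigma>)"
  by (rule finite_subset[of _ "Pow \<Sigma>"]) (auto simp: filt_W_def)

lemma Int_mem_filt_W: "prime_theory mHC \<Gamma> \<Longrightarrow> \<Gamma> \<inter> \<Sigma> \<in> filt_W \<Sigma>"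
  unfolding filt_W_def by blast

lemma filt_R_Int:
  assumes "unbox \<Sigma> \<subseteq> \<Sigma>" and "theory_of mHC \<Gamma>" and "unbox \<Gamma> \<subseteq> \<Delta>"
  shows "filt_R (\<Gamma> \<inter> \<Sigma>) (\<Delta> \<inter> \<Sigma>)"
  using assms unbox_subset_imp_subset[OF assms(2,3)] unfolding filt_R_def unbox_def by blast

lemma filt_le_Int:
  assumes "unbox \<Sigma> \<subseteq> \<Sigma>" and "prime_theory mHC \<Gamma>" and "theory_of mHC \<Delta>" and "\<Gamma> \<subseteq> \<Delta>"
  shows "filt_le (\<Gamma> \<inter> \<Sigma>) (\<Delta> \<inter> \<Sigma>)"
proof (cases "\<Gamma> = \<Delta>")
  case False
  with assms have "unbox \<Gamma> \<subseteq> \<Delta>" using psubset_imp_unbox_subset by blast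
  then show ?thesis
    using filt_R_Int[OF assms(1) prime_theory_theory_of[OF assms(2)]] unfolding filt_le_def by blast
qed (simp add: filt_le_def)

lemma filt_truth:
  assumes "unbox \<Sigma> \<subseteq> \<Sigma>" and "subformulas C \<subseteq> \<Sigma>" and "prime_theory mHC \<Gamma>"
  shows "\<Gamma> \<inter> \<Sigma> \<in> sem (filt_W \<Sigma>) filt_le filt_R (filt_V \<Sigma>) C \<longleftrightarrow> C \<in> \<Gamma>"
  using assms(2,3)
proof (induction C arbitrary: \<Gamma>)
  case (Var p)
  then show ?case using Int_mem_filt_W by (auto simp: filt_V_def)
next
  case Bot
  then show ?case by (simp add: prime_theory_def)
next
  case (Imp C D)
  let ?M = "sem (filt_W \<Sigma>) filt_le filt_R (filt_V \<Sigma>)"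
  have IH: "\<Delta> \<inter> \<Sigma> \<in> ?M C \<longleftrightarrow> C \<in> \<Delta>" "\<Delta> \<inter> \<Sigma> \<in> ?M D \<longleftrightarrow> D \<in> \<Delta>"
    if "prime_theory mHC \<Delta>" for \<Delta>
    using Imp.IH Imp.prems(1) that by auto
  show ?case
  proof
    assume Imp_true: "\<Gamma> \<inter> \<Sigma> \<in> ?M (Imp C D)"
    show "Imp C D \<in> \<Gamma>"
    proof (rule ccontr)
      assume "Imp C D \<notin> \<Gamma>"
      with Imp.prems(2) obtain \<Delta> where \<Delta>: "prime_theory mHC \<Delta>" "\<Gamma> \<subseteq> \<Delta>" "C \<in> \<Delta>" "D \<notin> \<Delta>"
        by (rule prime_extension_Imp)
      have "filt_le (\<Gamma> \<inter> \<Sigma>) (\<Delta> \<inter> \<Sigma>)"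
        using filt_le_Int[OF assms(1) Imp.prems(2) prime_theory_theory_of] \<Delta> by blast
      with Imp_true Int_mem_filt_W[OF \<Delta>(1)] IH[OF \<Delta>(1)] \<Delta>(3) have "D \<in> \<Delta>" by simp
      with \<Delta>(4) show False ..
    qed
  next
    assume "Imp C D \<in> \<Gamma>"
    have "T \<in> ?M D" if "T \<in> filt_W \<Sigma>" "filt_le (\<Gamma> \<inter> \<Sigma>) T" "T \<in> ?M C" for T
    proof -
      from \<open>T \<in> filt_W \<Sigma>\<close> obtain \<Delta> where \<Delta>: "prime_theory mHC \<Delta>" "T = \<Delta> \<inter> \<Sigma>"
        unfolding filt_W_def by blast
      have "Imp C D \<in> \<Delta>"
        using \<open>Imp C D \<in> \<Gamma>\<close> Imp.prems(1) that(2) \<Delta>(2) unfolding filt_le_def filt_R_def by auto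
      moreover have "C \<in> \<Delta>" using IH[OF \<Delta>(1)] that(3) \<Delta>(2) by simp
      ultimately have "D \<in> \<Delta>" using theory_of_mp prime_theory_theory_of[OF \<Delta>(1)] by blast
      then show ?thesis using IH[OF \<Delta>(1)] \<Delta>(2) by simp
    qed
    then show "\<Gamma> \<inter> \<Sigma> \<in> ?M (Imp C D)" using Int_mem_filt_W[OF Imp.prems(2)] by simp
  qed
next
  case (Conj C D)
  then show ?case using theory_of_Conj_iff[OF prime_theory_theory_of] by simp
next
  case (Disj C D)
  then show ?case using prime_theory_Disj_iff by simp
next
  case (Box C)
  let ?M = "sem (filt_W \<Sigma>) filt_le filt_R (filt_V \<Sigma>)"
  have IH: "\<Delta> \<inter> \<Sigma> \<in> ?M C \<longleftrightarrow> C \<in> \<Delta>" if "prime_theory mHC \<Delta>" for \<Delta>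
    using Box.IH Box.prems(1) that by auto
  have thy: "theory_of mHC \<Gamma>" using prime_theory_theory_of[OF Box.prems(2)] .
  show ?case
  proof
    assume Box_true: "\<Gamma> \<inter> \<Sigma> \<in> ?M (Box C)"
    show "Box C \<in> \<Gamma>"
    proof (rule ccontr)
      assume "Box C \<notin> \<Gamma>"
      with thy obtain \<Delta> where \<Delta>: "prime_theory mHC \<Delta>" "unbox \<Gamma> \<subseteq> \<Delta>" "C \<notin> \<Delta>"
        by (rule prime_extension_Box)
      have "filt_R (\<Gamma> \<inter> \<Sigma>) (\<Delta> \<inter> \<Sigma>)" using filt_R_Int[OF assms(1) thy \<Delta>(2)] .
      with Box_true Int_mem_filt_W[OF \<Delta>(1)] IH[OF \<Delta>(1)] have "C \<in> \<Delta>" by simp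
      with \<Delta>(3) show False ..
    qed
  next
    assume "Box C \<in> \<Gamma>"
    have "T \<in> ?M C" if "T \<in> filt_W \<Sigma>" "filt_R (\<Gamma> \<inter> \<Sigma>) T" for T
    proof -
      from \<open>T \<in> filt_W \<Sigma>\<close> obtain \<Delta> where \<Delta>: "prime_theory mHC \<Delta>" "T = \<Delta> \<inter> \<Sigma>"
        unfolding filt_W_def by blast
      have "C \<in> \<Delta>"
        using \<open>Box C \<in> \<Gamma>\<close> Box.prems(1) that(2) \<Delta>(2) unfolding filt_R_def unbox_def by auto
      then show ?thesis using IH[OF \<Delta>(1)] \<Delta>(2) by simp
    qed
    then show "\<Gamma> \<inter> \<Sigma> \<in> ?M (Box C)" using Int_mem_filt_W[OF Box.prems(2)] by simp
  qed
qed

lemma filtration_countermodel: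
  assumes "A \<notin> mHC"
  shows "\<exists>(W :: fm set set) le R V w. finite W \<and> mHC_frame W le R \<and> valuation W le V \<and>
    w \<in> W \<and> w \<notin> sem W le R V A"
proof -
  obtain \<Gamma> where "prime_theory mHC \<Gamma>" "A \<notin> \<Gamma>"
    using lindenbaum[OF theory_of_mHC assms] by blast
  then have "\<Gamma> \<inter> subformulas A \<notin> sem (filt_W (subformulas A)) filt_le filt_R (filt_V (subformulas A)) A"
    "\<Gamma> \<inter> subformulas A \<in> filt_W (subformulas A)"
    using filt_truth[OF unbox_subformulas order_refl] Int_mem_filt_W by blast+
  then show ?thesis
    using finite_filt_W[OF finite_subformulas] filt_mHC_frame filt_valuation by blast
qed

lemma sem_pullback:
  "sem N (\<lambda>m n. le (g m) (g n)) (\<lambda>m n. R (g m) (g n)) (\<lambda>p. {n \<in> N. g n \<in> V p}) A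
    = {n \<in> N. g n \<in> sem (g ` N) le R V A}"
  by (induction A) auto

lemma mHC_frame_pullback:
  assumes "mHC_frame (g ` N) le R" and "inj_on g N"
  shows "mHC_frame N (\<lambda>m n. le (g m) (g n)) (\<lambda>m n. R (g m) (g n))"
proof -
  have gN: "g n \<in> g ` N" if "n \<in> N" for n using that by (rule imageI)
  have inj: "g u = g v \<Longrightarrow> u = v" if "u \<in> N" "v \<in> N" for u v
    using assms(2) that by (simp add: inj_on_eq_iff)
  have refl: "\<forall>w\<in>g ` N. le w w"
    and trans: "\<forall>u\<in>g ` N. \<forall>v\<in>g ` N. \<forall>w\<in>g ` N. le u v \<longrightarrow> le v w \<longrightarrow> le u w"
    and antisym: "\<forall>u\<in>g ` N. \<forall>v\<in>g ` N. le u v \<longrightarrow> le v u \<longrightarrow> u = v"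
    and persist: "\<forall>w\<in>g ` N. \<forall>v\<in>g ` N. \<forall>x\<in>g ` N. le w v \<longrightarrow> R v x \<longrightarrow> R w x"
    and R_le: "\<forall>w\<in>g ` N. \<forall>x\<in>g ` N. R w x \<longrightarrow> le w x"
    and le_R: "\<forall>w\<in>g ` N. \<forall>v\<in>g ` N. le w v \<longrightarrow> w = v \<or> R w v"
    using assms(1) unfolding mHC_frame_def frame_def by blast+
  show ?thesis
    unfolding mHC_frame_def frame_def
  proof (intro conjI ballI impI)
    fix w assume "w \<in> N" then show "le (g w) (g w)" using refl gN by blast
  next
    fix u v w assume "u \<in> N" "v \<in> N" "w \<in> N" "le (g u) (g v)" "le (g v) (g w)"
    then show "le (g u) (g w)" using trans gN by blast
  next
    fix u v assume "u \<in> N" "v \<in> N" "le (g u) (g v)" "le (g v) (g u)"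
    then show "u = v" using antisym gN inj by blast
  next
    fix w v x assume "w \<in> N" "v \<in> N" "x \<in> N" "le (g w) (g v)" "R (g v) (g x)"
    then show "R (g w) (g x)" using persist gN by blast
  next
    fix w x assume "w \<in> N" "x \<in> N" "R (g w) (g x)"
    then show "le (g w) (g x)" using R_le gN by blast
  next
    fix w v assume "w \<in> N" "v \<in> N" "le (g w) (g v)"
    then show "w = v \<or> R (g w) (g v)" using le_R gN inj by blast
  qed
qed

lemma valuation_pullback:
  "valuation (g ` N) le V \<Longrightarrow> valuation N (\<lambda>m n. le (g m) (g n)) (\<lambda>p. {n \<in> N. g n \<in> V p})"
  unfolding valuation_def upset_def by auto

lemma countermodel_nat:
  assumes "finite W" and "mHC_frame W le R" and "valuation W le V"
    and "w \<in> W" and "w \<notin> sem W le R V A"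
  shows "\<exists>(N :: nat set) le' R' V' n. finite N \<and> mHC_frame N le' R' \<and> valuation N le' V' \<and>
    n \<in> N \<and> n \<notin> sem N le' R' V' A"
proof -
  obtain k g where W: "W = g ` {i. i < k}" and inj: "inj_on g {i::nat. i < k}"
    using finite_imp_nat_seg_image_inj_on[OF assms(1)] by blast
  obtain n where "n < k" "w = g n" using W assms(4) by blast
  let ?le = "\<lambda>m n. le (g m) (g n)" and ?R = "\<lambda>m n. R (g m) (g n)"
    and ?V = "\<lambda>p. {n \<in> {i. i < k}. g n \<in> V p}"
  have "mHC_frame {i. i < k} ?le ?R" using assms(2) inj unfolding W by (rule mHC_frame_pullback)
  moreover have "valuation {i. i < k} ?le ?V" using assms(3) unfolding W by (rule valuation_pullback)
  moreover have "n \<notin> sem {i. i < k} ?le ?R ?V A"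
    using assms(5) \<open>w = g n\<close> unfolding W sem_pullback by simp
  ultimately show ?thesis using \<open>n < k\<close> finite_Collect_less_nat by blast
qed

theorem corollary4p13:
  shows "canonical mHC \<and> fmp mHC"
proof
  show "canonical mHC" by (rule canonical_mHC)
  show "fmp mHC" unfolding fmp_def
  proof (intro allI impI)
    fix A assume "A \<notin> mHC"
    then obtain N :: "nat set" and le R V n where "finite N" "mHC_frame N le R"
      "valuation N le V" "n \<in> N" "n \<notin> sem N le R V A"
      using filtration_countermodel countermodel_nat by metis
    then show "\<exists>(W::nat set) le R V w. finite W \<and> frame W le R \<and> valid_in mHC W le R \<and>
        valuation W le V \<and> w \<in> W \<and> w \<notin> sem W le R V A"
      using mHC_valid_in mHC_frame_def by blast
  qed
qed

end
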